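(* Let $K$ be a field, $m\ge2$, $d_1,\ldots,d_m$ positive integers, $S=K[x_1,\ldots,x_m,y_1,\ldots,y_m]$, and for $1\le i<j\le m$ let $f_{ij}=x_i^{d_i}y_j^{d_j}-x_j^{d_j}y_i^{d_i}$. Let $J_L\subset S$ be the ideal generated by $f_{12},f_{13},\ldots,f_{1m}$. Then $\mathcal{R}=\{f_{12},\ldots,f_{1m}\}\cup\{g_{ij}:=y_1^{d_1}f_{ij}:2\le i<j\le m\}$ is a Gröbner basis of $J_L$ with respect to the lexicographic term order induced by $x_1\succ x_2\succ\cdots\succ x_m\succ y_1\succ\cdots\succ y_m$.
   Context: $J_L$ is the lattice basis ideal of the lattice $L\subset\mathbb{Z}^{2m}$ with $I_L=I_2(D)$, for the basis consisting of the exponent vectors of $f_{12},\ldots,f_{1m}$. *)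

theory Defs
  imports "HOL-Library.Poly_Mapping"
begin

text \<open>For fixed m, the ring S = K[x_1..x_m,y_1..y_m] is encoded with x_i as variable
  i-1 and y_i as variable m+i-1, i.e. S uses exactly the variables 0..2m-1.\<close>

type_synonym monom = "nat \<Rightarrow>\<^sub>0 nat"
type_synonym 'a mpoly = "monom \<Rightarrow>\<^sub>0 'a"

definition xvar :: "nat \<Rightarrow> nat \<Rightarrow> nat" where "xvar m i = i - 1"
definition yvar :: "nat \<Rightarrow> nat \<Rightarrow> nat" where "yvar m i = m + i - 1"

definition polyring :: "nat \<Rightarrow> ('a::field) mpoly set" where
  "polyring m = {p. \<forall>a\<in>Poly_Mapping.keys p. Poly_Mapping.keys a \<subseteq> {..<2*m} }"

definition ideal_gen :: "nat \<Rightarrow> ('a::field) mpoly set \<Rightarrow> 'a mpoly set" where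
  "ideal_gen m G = {p. \<exists>F c. finite F \<and> F \<subseteq> G \<and> (\<forall>g\<in>F. c g \<in> polyring m)
                          \<and> p = (\<Sum>g\<in>F. c g * g)}"

text \<open>Term order: the library linear order on monomials is lexicographic,
  comparing exponents at the least index where they differ, so variable 0 is the most
  significant: x_1 > x_2 > ... > x_m > y_1 > ... > y_m.\<close>

definition lead_monom :: "('a::zero) mpoly \<Rightarrow> monom" where
  "lead_monom p = Max (Poly_Mapping.keys p)"

definition init_term :: "('a::field) mpoly \<Rightarrow> 'a mpoly" where
  "init_term p = Poly_Mapping.single (lead_monom p) 1"

definition is_groebner_basis :: "nat \<Rightarrow> ('a::field) mpoly set \<Rightarrow> 'a mpoly set \<Rightarrow> bool" where
  "is_groebner_basis m G I \<longleftrightarrow> G \<subseteq> I \<and>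
     ideal_gen m (init_term ` (G - {0})) = ideal_gen m (init_term ` (I - {0}))"

definition xy_mon :: "nat \<Rightarrow> nat \<Rightarrow> nat \<Rightarrow> nat \<Rightarrow> nat \<Rightarrow> ('a::field) mpoly" where
  "xy_mon m i a j b = Poly_Mapping.single
      (Poly_Mapping.single (xvar m i) a + Poly_Mapping.single (yvar m j) b) 1"

definition y_pow :: "nat \<Rightarrow> nat \<Rightarrow> nat \<Rightarrow> ('a::field) mpoly" where
  "y_pow m j b = Poly_Mapping.single (Poly_Mapping.single (yvar m j) b) 1"

definition fbin :: "nat \<Rightarrow> (nat \<Rightarrow> nat) \<Rightarrow> nat \<Rightarrow> nat \<Rightarrow> ('a::field) mpoly" where
  "fbin m d i j = xy_mon m i (d i) j (d j) - xy_mon m j (d j) i (d i)"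

end

theory Submission
  imports Defs
begin

text \<open>Write a monomial in blocks: for each variable x_i or y_i count how many complete
  powers of degree d_i divide it. Each generator f_1j is a binomial whose two monomials differ
  by the swap x_1^d_1 y_j^d_j \<leftrightarrow> x_j^d_j y_1^d_1, so any map N on monomials that is unchanged
  by such swaps (in any monomial context) makes the coefficient sum of p over an N-fiber
  vanish for every p in J_L. Such an N is built from the block counts. A monomial divisible
  by no leading monomial of R turns out to be the lexicographically least element of its
  N-fiber, so it cannot be the leading monomial of p \<in> J_L: the fiber sum would be its
  nonzero coefficient. Together with R \<subseteq> J_L, which follows from
  y_1^d_1 f_ij = y_i^d_i f_1j - y_j^d_j f_1i, this is the Groebner basis property.\<close>

lemma polyring_zero: "0 \<in> polyring m"
  by (simp add: polyring_def)

lemma polyring_one: "1 \<in> polyring m"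
  by (simp add: polyring_def)

lemma polyring_single: "Poly_Mapping.keys a \<subseteq> {..<2*m} \<Longrightarrow> Poly_Mapping.single a c \<in> polyring m"
  by (simp add: polyring_def)

lemma polyring_add:
  assumes "p \<in> polyring m" "q \<in> polyring m"
  shows "p + q \<in> polyring m"
  using assms Poly_Mapping.keys_add[of p q] by (auto simp: polyring_def)

lemma polyring_uminus: "p \<in> polyring m \<Longrightarrow> - p \<in> polyring m"
  by (simp add: polyring_def)

lemma polyring_mult:
  assumes "p \<in> polyring m" "q \<in> polyring m"
  shows "p * q \<in> polyring m"
proof -
  have "Poly_Mapping.keys a \<subseteq> {..<2*m}" if "a \<in> Poly_Mapping.keys (p * q)" for a
  proof -
    from that keys_mult obtain b c
      where "a = b + c" "b \<in> Poly_Mapping.keys p" "c \<in> Poly_Mapping.keys q" by blast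
    with assms show ?thesis
      using Poly_Mapping.keys_add[of b c] unfolding polyring_def by blast
  qed
  then show ?thesis by (simp add: polyring_def)
qed

lemma polyring_sum: "(\<And>g. g \<in> F \<Longrightarrow> t g \<in> polyring m) \<Longrightarrow> sum t F \<in> polyring m"
  by (induction F rule: infinite_finite_induct) (auto intro: polyring_zero polyring_add)

lemma ideal_gen_zero: "0 \<in> ideal_gen m G"
  unfolding ideal_gen_def by (intro CollectI exI[of _ "{}"]) simp

lemma ideal_gen_add:
  assumes "p \<in> ideal_gen m G" "q \<in> ideal_gen m G"
  shows "p + q \<in> ideal_gen m G"
proof -
  from assms(1) obtain F1 c1 where 1: "finite F1" "F1 \<subseteq> G" "\<forall>g\<in>F1. c1 g \<in> polyring m"
      "p = (\<Sum>g\<in>F1. c1 g * g)"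
    unfolding ideal_gen_def by blast
  from assms(2) obtain F2 c2 where 2: "finite F2" "F2 \<subseteq> G" "\<forall>g\<in>F2. c2 g \<in> polyring m"
      "q = (\<Sum>g\<in>F2. c2 g * g)"
    unfolding ideal_gen_def by blast
  define c where "c g = (if g \<in> F1 then c1 g else 0) + (if g \<in> F2 then c2 g else 0)" for g
  have "(\<Sum>g\<in>F1 \<union> F2. c g * g)
      = (\<Sum>g\<in>F1 \<union> F2. if g \<in> F1 then c1 g * g else 0) + (\<Sum>g\<in>F1 \<union> F2. if g \<in> F2 then c2 g * g else 0)"
    unfolding c_def sum.distrib[symmetric] by (rule sum.cong) (auto simp: distrib_right)
  also have "\<dots> = p + q"
    using 1 2 by (simp add: sum.If_cases Int_absorb1)
  finally have "p + q = (\<Sum>g\<in>F1 \<union> F2. c g * g)" by simp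
  moreover have "\<forall>g\<in>F1 \<union> F2. c g \<in> polyring m"
    using 1 2 by (auto simp: c_def intro!: polyring_add polyring_zero)
  ultimately show ?thesis
    unfolding ideal_gen_def using 1 2 by (intro CollectI exI[of _ "F1 \<union> F2"] exI[of _ c]) auto
qed

lemma ideal_gen_mult:
  assumes "p \<in> ideal_gen m G" "c \<in> polyring m"
  shows "c * p \<in> ideal_gen m G"
proof -
  from assms(1) obtain F c1 where F: "finite F" "F \<subseteq> G" "\<forall>g\<in>F. c1 g \<in> polyring m"
      "p = (\<Sum>g\<in>F. c1 g * g)"
    unfolding ideal_gen_def by blast
  then have "c * p = (\<Sum>g\<in>F. (c * c1 g) * g)"
    by (simp add: sum_distrib_left mult.assoc)
  with F assms(2) show ?thesis
    unfolding ideal_gen_def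
    by (intro CollectI exI[of _ F] exI[of _ "\<lambda>g. c * c1 g"]) (auto intro: polyring_mult)
qed

lemma ideal_gen_generator:
  assumes "g \<in> G" "c \<in> polyring m"
  shows "c * g \<in> ideal_gen m G"
  unfolding ideal_gen_def using assms by (intro CollectI exI[of _ "{g}"] exI[of _ "\<lambda>_. c"]) auto

lemma ideal_gen_sum: "(\<And>g. g \<in> F \<Longrightarrow> t g \<in> ideal_gen m G) \<Longrightarrow> sum t F \<in> ideal_gen m G"
  by (induction F rule: infinite_finite_induct) (auto intro: ideal_gen_zero ideal_gen_add)

lemma ideal_gen_mono: "X \<subseteq> Y \<Longrightarrow> ideal_gen m X \<subseteq> ideal_gen m Y"
  unfolding ideal_gen_def by blast

lemma ideal_gen_subset:
  assumes "X \<subseteq> ideal_gen m Y"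
  shows "ideal_gen m X \<subseteq> ideal_gen m Y"
proof
  fix p assume "p \<in> ideal_gen m X"
  then obtain F c where F: "F \<subseteq> X" "\<forall>g\<in>F. c g \<in> polyring m" "p = (\<Sum>g\<in>F. c g * g)"
    unfolding ideal_gen_def by blast
  show "p \<in> ideal_gen m Y"
    unfolding F(3) using F assms by (intro ideal_gen_sum ideal_gen_mult) auto
qed

lemma ideal_gen_subset_polyring: "G \<subseteq> polyring m \<Longrightarrow> ideal_gen m G \<subseteq> polyring m"
  unfolding ideal_gen_def by (auto intro!: polyring_sum polyring_mult)

definition binom_poly :: "monom \<Rightarrow> monom \<Rightarrow> ('a::field) mpoly" where
  "binom_poly A B = Poly_Mapping.single A 1 - Poly_Mapping.single B 1"

lemma single_mult_binom_poly:
  "Poly_Mapping.single h 1 * binom_poly A B = binom_poly (h + A) (h + B)"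
  by (simp add: binom_poly_def right_diff_distrib mult_single)

lemma binom_poly_polyring:
  "Poly_Mapping.keys A \<subseteq> {..<2*m} \<Longrightarrow> Poly_Mapping.keys B \<subseteq> {..<2*m} \<Longrightarrow> binom_poly A B \<in> polyring m"
  unfolding binom_poly_def diff_conv_add_uminus
  by (intro polyring_add polyring_uminus polyring_single)

definition fiber_coeff :: "(monom \<Rightarrow> 'b) \<Rightarrow> 'b \<Rightarrow> ('a::field) mpoly \<Rightarrow> 'a" where
  "fiber_coeff N v p = (\<Sum>a\<in>Poly_Mapping.keys p. if N a = v then Poly_Mapping.lookup p a else 0)"

lemma fiber_coeff_superset:
  assumes "finite A" "Poly_Mapping.keys p \<subseteq> A"
  shows "fiber_coeff N v p = (\<Sum>a\<in>A. if N a = v then Poly_Mapping.lookup p a else 0)"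
  unfolding fiber_coeff_def using assms
  by (intro sum.mono_neutral_left) (auto simp: in_keys_iff)

lemma fiber_coeff_add: "fiber_coeff N v (p + q) = fiber_coeff N v p + fiber_coeff N v q"
proof -
  let ?A = "Poly_Mapping.keys p \<union> Poly_Mapping.keys q"
  have "fiber_coeff N v (p + q) = (\<Sum>a\<in>?A. if N a = v then Poly_Mapping.lookup (p + q) a else 0)"
    by (rule fiber_coeff_superset) (simp_all add: Poly_Mapping.keys_add)
  also have "\<dots> = (\<Sum>a\<in>?A. if N a = v then Poly_Mapping.lookup p a else 0)
                + (\<Sum>a\<in>?A. if N a = v then Poly_Mapping.lookup q a else 0)"
    unfolding sum.distrib[symmetric] by (rule sum.cong) (auto simp: lookup_add)
  also have "\<dots> = fiber_coeff N v p + fiber_coeff N v q"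
    by (subst (1 2) fiber_coeff_superset[of ?A]) auto
  finally show ?thesis .
qed

lemma fiber_coeff_diff: "fiber_coeff N v (p - q) = fiber_coeff N v p - fiber_coeff N v q"
proof -
  have "fiber_coeff N v (- q) = - fiber_coeff N v q"
    unfolding fiber_coeff_def by (simp add: sum_negf[symmetric] if_distrib cong: if_cong)
  then show ?thesis
    using fiber_coeff_add[of N v p "- q"] by simp
qed

lemma fiber_coeff_sum: "fiber_coeff N v (sum t F) = (\<Sum>g\<in>F. fiber_coeff N v (t g))"
  by (induction F rule: infinite_finite_induct) (simp_all add: fiber_coeff_add fiber_coeff_def[of _ _ 0])

lemma fiber_coeff_single:
  "fiber_coeff N v (Poly_Mapping.single a c) = (if N a = v then c else 0)"
  by (simp add: fiber_coeff_def)

lemma fiber_coeff_mult_binom_poly: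
  assumes "\<And>h. N (h + A) = N (h + B)"
  shows "fiber_coeff N v (c * binom_poly A B) = 0"
proof -
  have expand: "c = (\<Sum>h\<in>Poly_Mapping.keys c. Poly_Mapping.single h (Poly_Mapping.lookup c h))"
    by (rule poly_mapping_eqI) (simp add: lookup_sum lookup_single when_def in_keys_iff)
  have "c * binom_poly A B = (\<Sum>h\<in>Poly_Mapping.keys c.
      Poly_Mapping.single (h + A) (Poly_Mapping.lookup c h)
      - Poly_Mapping.single (h + B) (Poly_Mapping.lookup c h))"
    by (subst expand)
      (simp add: binom_poly_def sum_distrib_right right_diff_distrib mult_single sum_subtractf add.commute)
  then show ?thesis
    by (simp add: fiber_coeff_sum fiber_coeff_diff fiber_coeff_single assms)
qed

lemma fiber_coeff_ideal_gen_binom_poly: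
  assumes "\<And>g. g \<in> G \<Longrightarrow> \<exists>A B. g = binom_poly A B \<and> (\<forall>h. N (h + A) = N (h + B))"
    and "p \<in> ideal_gen m G"
  shows "fiber_coeff N v p = 0"
proof -
  from assms(2) obtain F c where F: "F \<subseteq> G" "p = (\<Sum>g\<in>F. c g * g)"
    unfolding ideal_gen_def by blast
  have "fiber_coeff N v (c g * g) = 0" if "g \<in> F" for g
  proof -
    from assms(1) that F(1) obtain A B where "g = binom_poly A B" "\<forall>h. N (h + A) = N (h + B)"
      by blast
    then show ?thesis by (simp add: fiber_coeff_mult_binom_poly)
  qed
  then show ?thesis by (simp add: F(2) fiber_coeff_sum)
qed

lemma lead_monom_in_keys: "p \<noteq> 0 \<Longrightarrow> lead_monom p \<in> Poly_Mapping.keys p"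
  unfolding lead_monom_def by (simp add: Max_in)

lemma le_lead_monom: "a \<in> Poly_Mapping.keys p \<Longrightarrow> a \<le> lead_monom p"
  unfolding lead_monom_def by simp

text \<open>All other monomials of p are smaller than the leading one, hence outside its fiber.\<close>

lemma fiber_coeff_lead_monom:
  assumes "p \<noteq> 0" and "\<And>a. N a = N (lead_monom p) \<Longrightarrow> lead_monom p \<le> a"
  shows "fiber_coeff N (N (lead_monom p)) p = Poly_Mapping.lookup p (lead_monom p)"
proof -
  let ?w = "lead_monom p"
  have "(\<Sum>a\<in>Poly_Mapping.keys p. if N a = N ?w then Poly_Mapping.lookup p a else 0)
      = (\<Sum>a\<in>Poly_Mapping.keys p. if a = ?w then Poly_Mapping.lookup p a else 0)"
    using assms(2) le_lead_monom by (intro sum.cong) (auto intro: antisym)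
  then show ?thesis
    using lead_monom_in_keys[OF assms(1)] by (simp add: fiber_coeff_def)
qed

lemma monom_less_at:
  fixes a b :: monom
  assumes "\<And>v. v < k \<Longrightarrow> Poly_Mapping.lookup a v = Poly_Mapping.lookup b v"
    and "Poly_Mapping.lookup a k < Poly_Mapping.lookup b k"
  shows "a < b"
  unfolding less_poly_mapping.rep_eq less_fun_def using assms by blast

lemma
  assumes "B < A"
  shows binom_poly_nonzero: "binom_poly A B \<noteq> 0"
    and lead_monom_binom_poly: "lead_monom (binom_poly A B) = A"
proof -
  have keys: "Poly_Mapping.keys (binom_poly A B) = {A, B}"
    using assms by (auto simp: binom_poly_def in_keys_iff lookup_minus lookup_single when_def
        split: if_splits)
  then show "binom_poly A B \<noteq> 0"
    by (metis insert_not_empty keys_eq_empty)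
  show "lead_monom (binom_poly A B) = A"
    unfolding lead_monom_def keys using assms by (auto simp: max_def dest: leD)
qed

lemma init_term_eq_mult:
  assumes "\<And>v. Poly_Mapping.lookup (lead_monom g) v \<le> Poly_Mapping.lookup (lead_monom p) v"
  shows "init_term p = Poly_Mapping.single (lead_monom p - lead_monom g) 1 * init_term g"
proof -
  have "lead_monom p - lead_monom g + lead_monom g = lead_monom p"
    by (rule poly_mapping_eqI) (simp add: lookup_add lookup_minus assms)
  then show ?thesis by (simp add: init_term_def mult_single)
qed

lemma sum_split_at:
  fixes f :: "nat \<Rightarrow> 'b::comm_monoid_add"
  assumes "a \<le> j" "j < b"
  shows "(\<Sum>i=a..<b. f i) = (\<Sum>i=a..<j. f i) + f j + (\<Sum>i\<in>{j<..<b}. f i)"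
proof -
  have split: "{a..<b} = {a..<j} \<union> ({j} \<union> {j<..<b})" using assms by auto
  have "sum f {a..<b} = sum f {a..<j} + sum f ({j} \<union> {j<..<b})"
    unfolding split by (rule sum.union_disjoint) auto
  then show ?thesis by (simp add: add.assoc)
qed

locale binomial_setting =
  fixes m :: nat and d :: "nat \<Rightarrow> nat"
  assumes two_le_m: "2 \<le> m" and d_pos: "\<forall>i\<in>{1..m}. 0 < d i"
begin

text \<open>Variable v < 2m is x_(v+1) for v < m and y_(v+1-m) otherwise; var_deg v is the exponent
  d_i with which it occurs in the generators, and quot w v counts the complete blocks
  of that size in w.\<close>

definition var_deg :: "nat \<Rightarrow> nat" where
  "var_deg v = d (if v < m then v + 1 else v + 1 - m)"

definition blk :: "nat \<Rightarrow> monom" where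
  "blk v = Poly_Mapping.single v (var_deg v)"

definition quot :: "monom \<Rightarrow> nat \<Rightarrow> nat" where
  "quot w v = Poly_Mapping.lookup w v div var_deg v"

lemma var_deg_pos:
  assumes "v < 2 * m" shows "0 < var_deg v"
proof -
  have "(if v < m then v + 1 else v + 1 - m) \<in> {1..m}" using assms by auto
  then show ?thesis using d_pos by (simp add: var_deg_def)
qed

lemma var_deg_x: "i \<in> {1..m} \<Longrightarrow> var_deg (i - 1) = d i"
  by (auto simp: var_deg_def)

lemma var_deg_y: "i \<in> {1..m} \<Longrightarrow> var_deg (m + i - 1) = d i"
  by (auto simp: var_deg_def)

lemma lookup_blk: "Poly_Mapping.lookup (blk v) u = (if u = v then var_deg v else 0)"
  by (simp add: blk_def lookup_single when_def)

lemma keys_blk: "Poly_Mapping.keys (blk v) \<subseteq> {v}"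
  by (simp add: blk_def)

lemma quot_add_blk: "v < 2 * m \<Longrightarrow> quot (h + blk v) u = quot h u + (if u = v then 1 else 0)"
  using var_deg_pos[of v] by (simp add: quot_def lookup_add lookup_blk div_add_self2)

lemma mod_add_blk:
  "Poly_Mapping.lookup (h + blk v) u mod var_deg u = Poly_Mapping.lookup h u mod var_deg u"
  by (simp add: lookup_add lookup_blk)

lemma quot_pos_iff: "v < 2 * m \<Longrightarrow> 0 < quot w v \<longleftrightarrow> var_deg v \<le> Poly_Mapping.lookup w v"
  using var_deg_pos[of v] by (simp add: quot_def div_greater_zero_iff)

lemma lookup_eq_quot_mod:
  "Poly_Mapping.lookup w v = quot w v * var_deg v + Poly_Mapping.lookup w v mod var_deg v"
  by (simp add: quot_def)

lemma lookup_eq_if_quot_mod_eq: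
  assumes "quot a v = quot w v"
    and "Poly_Mapping.lookup a v mod var_deg v = Poly_Mapping.lookup w v mod var_deg v"
  shows "Poly_Mapping.lookup a v = Poly_Mapping.lookup w v"
  using assms lookup_eq_quot_mod[of a v] lookup_eq_quot_mod[of w v] by metis

definition ysum :: "monom \<Rightarrow> nat" where
  "ysum w = (\<Sum>u=1..<m. quot w (m + u))"

text \<open>The swap x_1^d_1 y_j^d_j \<leftrightarrow> x_j^d_j y_1^d_1 preserves the residues, the number of x_1 and
  y_1 blocks together, the number of x_1 blocks minus the total number of y_j blocks (j \<ge> 2), and
  for each j \<ge> 2 the number of x_j and y_j blocks together. Without an x_1 or y_1 block no
  swap applies, and the monomial itself is kept.\<close>

definition move_inv :: "monom \<Rightarrow> (nat \<Rightarrow> nat) \<times> nat \<times> int \<times> (nat \<Rightarrow> nat)" where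
  "move_inv w = (if quot w 0 + quot w m = 0 then (Poly_Mapping.lookup w, 0, 0, \<lambda>_. 0)
     else (\<lambda>v. if v < 2 * m then Poly_Mapping.lookup w v mod var_deg v else Poly_Mapping.lookup w v,
           quot w 0 + quot w m, int (quot w 0) - int (ysum w),
           \<lambda>u. if u \<in> {1..<m} then quot w u + quot w (m + u) else 0))"

lemma move_inv_swap:
  assumes u: "u \<in> {1..<m}"
  shows "move_inv (h + (blk 0 + blk (m + u))) = move_inv (h + (blk u + blk m))"
proof -
  let ?a = "h + (blk 0 + blk (m + u))" and ?b = "h + (blk u + blk m)"
  have bounds: "0 < 2 * m" "m + u < 2 * m" "u < 2 * m" "m < 2 * m" using u by auto
  have qa: "quot ?a v = quot h v + (if v = 0 then 1 else 0) + (if v = m + u then 1 else 0)" for v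
    by (simp only: add.assoc[symmetric] quot_add_blk[OF bounds(2)] quot_add_blk[OF bounds(1)])
  have qb: "quot ?b v = quot h v + (if v = u then 1 else 0) + (if v = m then 1 else 0)" for v
    by (simp only: add.assoc[symmetric] quot_add_blk[OF bounds(4)] quot_add_blk[OF bounds(3)])
  have res: "Poly_Mapping.lookup ?a v mod var_deg v = Poly_Mapping.lookup ?b v mod var_deg v" for v
    by (simp add: add.assoc[symmetric] mod_add_blk)
  have high: "Poly_Mapping.lookup ?a v = Poly_Mapping.lookup ?b v" if "2 * m \<le> v" for v
    using that u by (simp add: lookup_add lookup_blk)
  have "ysum ?a = (\<Sum>v=1..<m. quot h (m + v) + (if v = u then 1 else 0))"
    unfolding ysum_def by (rule sum.cong) (use u in \<open>auto simp: qa\<close>)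
  then have ysum_a: "ysum ?a = ysum h + 1"
    using u by (simp add: sum.distrib ysum_def)
  have ysum_b: "ysum ?b = ysum h"
    unfolding ysum_def by (rule sum.cong) (use u in \<open>auto simp: qb\<close>)
  have x1y1: "quot ?a 0 + quot ?a m = quot h 0 + quot h m + 1"
    "quot ?b 0 + quot ?b m = quot h 0 + quot h m + 1"
    using u by (auto simp: qa qb)
  show ?thesis
    unfolding move_inv_def x1y1 ysum_a ysum_b using res high u
    by (auto simp: qa qb fun_eq_iff)
qed

text \<open>w is standard iff no leading monomial of R divides it; these are
  x_1^d_1 y_(v+1)^d_(v+1) (0 < v < m) and y_1^d_1 x_(u+1)^d_(u+1) y_(v+1)^d_(v+1) (0 < u < v < m).\<close>

definition standard :: "monom \<Rightarrow> bool" where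
  "standard w \<longleftrightarrow> (\<forall>v\<in>{1..<m}. quot w 0 = 0 \<or> quot w (m + v) = 0) \<and>
     (\<forall>u v. 0 < u \<longrightarrow> u < v \<longrightarrow> v < m \<longrightarrow> quot w m = 0 \<or> quot w u = 0 \<or> quot w (m + v) = 0)"

lemma standard_x1_blockD:
  assumes "standard w" "v \<in> {1..<m}" "quot w (m + v) \<noteq> 0" shows "quot w 0 = 0"
proof -
  from assms(1) have "\<forall>v\<in>{1..<m}. quot w 0 = 0 \<or> quot w (m + v) = 0"
    unfolding standard_def by (rule conjunct1)
  then have "quot w 0 = 0 \<or> quot w (m + v) = 0" using assms(2) by (rule bspec)
  with assms(3) show ?thesis by simp
qed
lemma standard_y1_blockD:
  assumes "standard w" "0 < u" "u < v" "v < m" "quot w m \<noteq> 0" "quot w u \<noteq> 0"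
  shows "quot w (m + v) = 0"
proof -
  from assms(1) have block: "\<forall>u v. 0 < u \<longrightarrow> u < v \<longrightarrow> v < m \<longrightarrow> quot w m = 0 \<or> quot w u = 0 \<or> quot w (m + v) = 0"
    unfolding standard_def by (rule conjunct2)
  show ?thesis using block[rule_format, OF assms(2-4)] assms(5,6) by simp
qed

lemma move_inv_eqD:
  assumes "move_inv a = move_inv w" and "quot w 0 + quot w m \<noteq> 0"
  shows "\<And>v. v < 2 * m \<Longrightarrow>
      Poly_Mapping.lookup a v mod var_deg v = Poly_Mapping.lookup w v mod var_deg v"
    and "\<And>v. 2 * m \<le> v \<Longrightarrow> Poly_Mapping.lookup a v = Poly_Mapping.lookup w v"
    and "quot a 0 + quot a m = quot w 0 + quot w m"
    and "int (quot a 0) - int (ysum a) = int (quot w 0) - int (ysum w)"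
    and "\<And>u. u \<in> {1..<m} \<Longrightarrow> quot a u + quot a (m + u) = quot w u + quot w (m + u)"
proof -
  have "quot a 0 + quot a m \<noteq> 0"
    using assms by (auto simp: move_inv_def split: if_splits)
  note eq = assms(1)[unfolded move_inv_def if_not_P[OF this] if_not_P[OF assms(2)]]
  from eq have res: "\<forall>v. (if v < 2 * m then Poly_Mapping.lookup a v mod var_deg v else Poly_Mapping.lookup a v)
        = (if v < 2 * m then Poly_Mapping.lookup w v mod var_deg v else Poly_Mapping.lookup w v)"
    and x1y1: "quot a 0 + quot a m = quot w 0 + quot w m"
    and x1_minus_y: "int (quot a 0) - int (ysum a) = int (quot w 0) - int (ysum w)"
    and pairs: "\<forall>u. (if u \<in> {1..<m} then quot a u + quot a (m + u) else 0)
        = (if u \<in> {1..<m} then quot w u + quot w (m + u) else 0)"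
    by (simp_all add: fun_eq_iff)
  show "Poly_Mapping.lookup a v mod var_deg v = Poly_Mapping.lookup w v mod var_deg v" if "v < 2 * m" for v
    using res[rule_format, of v] that by simp
  show "Poly_Mapping.lookup a v = Poly_Mapping.lookup w v" if "2 * m \<le> v" for v
    using res[rule_format, of v] that by simp
  show "quot a u + quot a (m + u) = quot w u + quot w (m + u)" if "u \<in> {1..<m}" for u
    using pairs[rule_format, of u] that by simp
  show "quot a 0 + quot a m = quot w 0 + quot w m" by (fact x1y1)
  show "int (quot a 0) - int (ysum a) = int (quot w 0) - int (ysum w)" by (fact x1_minus_y)
qed

lemma move_inv_eq_imp_eq:
  assumes eq: "move_inv a = move_inv w" and nz: "quot w 0 + quot w m \<noteq> 0"
    and x_eq: "\<And>v. v < m \<Longrightarrow> quot a v = quot w v"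
  shows "a = w"
proof (rule poly_mapping_eqI)
  fix v
  have "quot a v = quot w v" if v: "v < 2 * m"
  proof -
    consider "v < m" | "v = m" | "m < v" by linarith
    then show ?thesis
    proof cases
      case 2 then show ?thesis using move_inv_eqD(3)[OF eq nz] x_eq[of 0] two_le_m by simp
    next
      case 3
      then have u: "v - m \<in> {1..<m}" using v by auto
      then have "quot a (m + (v - m)) = quot w (m + (v - m))"
        using move_inv_eqD(5)[OF eq nz u] x_eq[of "v - m"] by simp
      with 3 show ?thesis by simp
    qed (rule x_eq)
  qed
  then show "Poly_Mapping.lookup a v = Poly_Mapping.lookup w v"
    using move_inv_eqD(1,2)[OF eq nz, of v] lookup_eq_if_quot_mod_eq[of a v w]
    by (cases "v < 2 * m") auto
qed

lemma move_inv_eq_less: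
  assumes eq: "move_inv a = move_inv w" and nz: "quot w 0 + quot w m \<noteq> 0" and "k < m"
    and below: "\<And>v. v < k \<Longrightarrow> quot a v = quot w v" and at: "quot w k < quot a k"
  shows "w < a"
proof (rule monom_less_at)
  fix v assume "v < k"
  then show "Poly_Mapping.lookup w v = Poly_Mapping.lookup a v"
    using \<open>k < m\<close> move_inv_eqD(1)[OF eq nz, of v] below[of v]
      lookup_eq_if_quot_mod_eq[of a v w] by simp
next
  have "k < 2 * m" using \<open>k < m\<close> by simp
  then have "quot w k * var_deg k < quot a k * var_deg k"
    using at var_deg_pos by simp
  then show "Poly_Mapping.lookup w k < Poly_Mapping.lookup a k"
    using move_inv_eqD(1)[OF eq nz \<open>k < 2 * m\<close>]
      lookup_eq_quot_mod[of a k] lookup_eq_quot_mod[of w k] by linarith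
qed

lemma standard_quot_x1_le:
  assumes "standard w" "move_inv a = move_inv w" "quot w 0 + quot w m \<noteq> 0"
  shows "quot w 0 \<le> quot a 0"
proof (cases "ysum w = 0")
  case True
  then show ?thesis using move_inv_eqD(4)[OF assms(2,3)] by linarith
next
  case False
  then obtain v where "v \<in> {1..<m}" "quot w (m + v) \<noteq> 0"
    unfolding ysum_def by (meson sum.neutral)
  then show ?thesis using standard_x1_blockD[OF assms(1)] by simp
qed

text \<open>A standard w with a y_1- and an x_(k+1)-block has no y_j-block for j > k+1. So if a had
  more y_(k+1)-blocks than w and the same ones before, it would have more y-blocks in total.\<close>

lemma standard_quot_first_diff:
  assumes std: "standard w" and eq: "move_inv a = move_inv w" and nz: "quot w 0 + quot w m \<noteq> 0"
    and k: "k \<in> {1..<m}" and below: "\<And>v. v < k \<Longrightarrow> quot a v = quot w v"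
    and "quot a k \<noteq> quot w k"
  shows "quot w k < quot a k"
proof (rule ccontr)
  assume "\<not> ?thesis"
  with \<open>quot a k \<noteq> quot w k\<close> have x_less: "quot a k < quot w k" by simp
  note eqs = move_inv_eqD[OF eq nz]
  have ysum_eq: "ysum a = ysum w" using eqs(4) below[of 0] k by simp
  have y_less: "quot w (m + k) < quot a (m + k)" using eqs(5)[OF k] x_less by simp
  have y_before: "quot a (m + u) = quot w (m + u)" if "u \<in> {1..<k}" for u
    using eqs(5)[of u] below[of u] that k by simp
  have "quot a (m + k) \<le> ysum a"
    unfolding ysum_def using k by (intro member_le_sum) auto
  then have "ysum w \<noteq> 0" using ysum_eq y_less by simp
  then obtain v where "v \<in> {1..<m}" "quot w (m + v) \<noteq> 0"
    unfolding ysum_def by (meson sum.neutral)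
  then have "quot w 0 = 0" using standard_x1_blockD[OF std] by blast
  with nz have "quot w m \<noteq> 0" by simp
  have y_after: "quot w (m + v) = 0" if "v \<in> {k<..<m}" for v
    using standard_y1_blockD[OF std _ _ _ \<open>quot w m \<noteq> 0\<close>, where u = k] that k x_less by simp
  have "ysum w = (\<Sum>u=1..<k. quot w (m + u)) + quot w (m + k) + (\<Sum>u\<in>{k<..<m}. quot w (m + u))"
    unfolding ysum_def using k by (intro sum_split_at) auto
  also have "\<dots> = (\<Sum>u=1..<k. quot a (m + u)) + quot w (m + k)"
  proof -
    have "(\<Sum>u=1..<k. quot w (m + u)) = (\<Sum>u=1..<k. quot a (m + u))"
      by (rule sum.cong) (simp_all add: y_before)
    moreover have "(\<Sum>u\<in>{k<..<m}. quot w (m + u)) = 0"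
      by (rule sum.neutral) (simp add: y_after)
    ultimately show ?thesis by simp
  qed
  also have "\<dots> < (\<Sum>u=1..<k. quot a (m + u)) + quot a (m + k) + (\<Sum>u\<in>{k<..<m}. quot a (m + u))"
    using y_less by simp
  also have "\<dots> = ysum a"
    unfolding ysum_def using k by (intro sum_split_at[symmetric]) auto
  finally show False using ysum_eq by simp
qed

lemma standard_le_of_move_inv_eq:
  assumes std: "standard w" and eq: "move_inv a = move_inv w"
  shows "w \<le> a"
proof (cases "quot w 0 + quot w m = 0")
  case True
  then have "quot a 0 + quot a m = 0"
    using eq by (auto simp: move_inv_def split: if_splits)
  with True eq have "Poly_Mapping.lookup a = Poly_Mapping.lookup w"
    by (simp add: move_inv_def)
  then show ?thesis by (simp add: poly_mapping_eqI)
next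
  case nz: False
  show ?thesis
  proof (cases "\<forall>v<m. quot a v = quot w v")
    case True
    then show ?thesis using move_inv_eq_imp_eq[OF eq nz] by simp
  next
    case False
    then obtain k where k: "k < m" "quot a k \<noteq> quot w k" "\<And>v. v < k \<Longrightarrow> quot a v = quot w v"
      using exists_least_iff[of "\<lambda>k. k < m \<and> quot a k \<noteq> quot w k"] by force
    have "quot w k < quot a k"
    proof (cases "k = 0")
      case True
      then show ?thesis using standard_quot_x1_le[OF std eq nz] k(2) by simp
    next
      case False
      then show ?thesis using standard_quot_first_diff[OF std eq nz _ k(3,2)] k(1) by simp
    qed
    then show ?thesis using move_inv_eq_less[OF eq nz k(1,3)] by simp
  qed
qed

lemma fbin_eq:
  assumes "i \<in> {1..m}" "j \<in> {1..m}"
  shows "fbin m d i j = binom_poly (blk (i - 1) + blk (m + (j - 1))) (blk (j - 1) + blk (m + (i - 1)))"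
  using assms var_deg_x[OF assms(1)] var_deg_x[OF assms(2)] var_deg_y[OF assms(1)] var_deg_y[OF assms(2)]
  by (simp add: fbin_def xy_mon_def binom_poly_def xvar_def yvar_def blk_def)

lemma y_pow_eq: "i \<in> {1..m} \<Longrightarrow> y_pow m i (d i) = Poly_Mapping.single (blk (m + (i - 1))) 1"
  using var_deg_y by (simp add: y_pow_def yvar_def blk_def)

lemma fbin_1_eq: "u \<in> {1..<m} \<Longrightarrow> fbin m d 1 (u + 1) = binom_poly (blk 0 + blk (m + u)) (blk u + blk m)"
  using two_le_m by (simp add: fbin_eq)

lemma y_pow_mult_fbin_eq:
  assumes "0 < u" "u < v" "v < m"
  shows "y_pow m 1 (d 1) * fbin m d (u + 1) (v + 1)
    = binom_poly (blk m + (blk u + blk (m + v))) (blk m + (blk v + blk (m + u)))"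
proof -
  have y1: "y_pow m 1 (d 1) = Poly_Mapping.single (blk m) 1"
    using y_pow_eq[of 1] two_le_m by simp
  have f: "fbin m d (u + 1) (v + 1) = binom_poly (blk u + blk (m + v)) (blk v + blk (m + u))"
    using assms fbin_eq[of "u + 1" "v + 1"] by simp
  show ?thesis unfolding y1 f by (rule single_mult_binom_poly)
qed

lemma y_pow_mult_fbin_syzygy:
  assumes "0 < u" "u < v" "v < m"
  shows "y_pow m 1 (d 1) * fbin m d (u + 1) (v + 1)
    = y_pow m (u + 1) (d (u + 1)) * fbin m d 1 (v + 1)
      - y_pow m (v + 1) (d (v + 1)) * (fbin m d 1 (u + 1) :: 'a::field mpoly)"
proof -
  have y: "y_pow m (u + 1) (d (u + 1)) = (Poly_Mapping.single (blk (m + u)) 1 :: 'a::field mpoly)"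
    "y_pow m (v + 1) (d (v + 1)) = (Poly_Mapping.single (blk (m + v)) 1 :: 'a mpoly)"
    using assms y_pow_eq[of "u + 1"] y_pow_eq[of "v + 1"] by simp_all
  have f: "fbin m d 1 (u + 1) = (binom_poly (blk 0 + blk (m + u)) (blk u + blk m) :: 'a mpoly)"
    "fbin m d 1 (v + 1) = (binom_poly (blk 0 + blk (m + v)) (blk v + blk m) :: 'a mpoly)"
    using assms fbin_1_eq[of u] fbin_1_eq[of v] by simp_all
  show ?thesis
    unfolding y_pow_mult_fbin_eq[OF assms] y f single_mult_binom_poly
    by (simp add: binom_poly_def add_ac)
qed

lemma f1_lead_less: "u \<in> {1..<m} \<Longrightarrow> blk u + blk m < blk 0 + blk (m + u)"
  by (rule monom_less_at[of 0]) (use var_deg_pos[of 0] in \<open>auto simp: lookup_add lookup_blk\<close>)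

lemma y_pow_mult_fbin_lead_less:
  assumes "0 < u" "u < v" "v < m"
  shows "blk m + (blk v + blk (m + u)) < blk m + (blk u + blk (m + v))"
proof -
  have "blk v + blk (m + u) < blk u + blk (m + v)"
    by (rule monom_less_at[of u]) (use assms var_deg_pos[of u] in \<open>auto simp: lookup_add lookup_blk\<close>)
  then show ?thesis by (rule add_strict_left_mono)
qed

lemma lookup_blk_add_le:
  assumes "u \<noteq> v" "var_deg u \<le> Poly_Mapping.lookup w u" "var_deg v \<le> Poly_Mapping.lookup w v"
  shows "Poly_Mapping.lookup (blk u + blk v) x \<le> Poly_Mapping.lookup w x"
  using assms by (auto simp: lookup_add lookup_blk)

lemma keys_blk_add: "Poly_Mapping.keys (blk u + blk v) \<subseteq> {u, v}"
  using Poly_Mapping.keys_add[of "blk u" "blk v"] keys_blk[of u] keys_blk[of v] by blast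

abbreviation f1_gens :: "('a::field) mpoly set" where
  "f1_gens \<equiv> {fbin m d 1 j | j. 2 \<le> j \<and> j \<le> m}"

abbreviation groebner_gens :: "('a::field) mpoly set" where
  "groebner_gens \<equiv> f1_gens \<union> {y_pow m 1 (d 1) * fbin m d i j | i j. 2 \<le> i \<and> i < j \<and> j \<le> m}"

lemma f1_gens_binom_poly:
  assumes "g \<in> f1_gens"
  shows "\<exists>A B. g = binom_poly A B \<and> (\<forall>h. move_inv (h + A) = move_inv (h + B))"
proof -
  from assms obtain j where "2 \<le> j" "j \<le> m" "g = fbin m d 1 j" by blast
  then have u: "j - 1 \<in> {1..<m}" and "g = fbin m d 1 (j - 1 + 1)" by auto
  then show ?thesis using fbin_1_eq[OF u] move_inv_swap[OF u] by blast
qed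

lemma f1_gens_subset_polyring: "(f1_gens :: ('a::field) mpoly set) \<subseteq> polyring m"
proof
  fix g :: "'a mpoly" assume "g \<in> f1_gens"
  then obtain j where "2 \<le> j" "j \<le> m" "g = fbin m d 1 j" by blast
  then have u: "j - 1 \<in> {1..<m}" and g: "g = fbin m d 1 (j - 1 + 1)" by auto
  have "Poly_Mapping.keys (blk 0 + blk (m + (j - 1))) \<subseteq> {..<2 * m}"
    "Poly_Mapping.keys (blk (j - 1) + blk m) \<subseteq> {..<2 * m}"
    using u keys_blk_add by fastforce+
  then show "g \<in> polyring m"
    unfolding g fbin_1_eq[OF u] by (rule binom_poly_polyring)
qed

lemma groebner_gens_subset: "(groebner_gens :: ('a::field) mpoly set) \<subseteq> ideal_gen m f1_gens"
proof
  fix g :: "'a mpoly" assume "g \<in> groebner_gens"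
  then consider "g \<in> f1_gens"
    | i j where "2 \<le> i" "i < j" "j \<le> m" "g = y_pow m 1 (d 1) * fbin m d i j" by blast
  then show "g \<in> ideal_gen m f1_gens"
  proof cases
    case 1
    then show ?thesis using ideal_gen_generator[OF 1 polyring_one] by simp
  next
    case (2 i j)
    then have uv: "0 < i - 1" "i - 1 < j - 1" "j - 1 < m" by auto
    have y: "y_pow m k (d k) \<in> polyring m" if "k \<in> {1..m}" for k
      unfolding y_pow_eq[OF that] using that keys_blk by (intro polyring_single) fastforce
    have "y_pow m i (d i) * fbin m d 1 j + (- y_pow m j (d j)) * fbin m d 1 i \<in> ideal_gen m f1_gens"
      using 2 y[of i] y[of j] by (intro ideal_gen_add ideal_gen_generator polyring_uminus) auto
    moreover have "g = y_pow m i (d i) * fbin m d 1 j - y_pow m j (d j) * fbin m d 1 i"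
      using y_pow_mult_fbin_syzygy[OF uv] 2 by simp
    ultimately show ?thesis by simp
  qed
qed

lemma lead_monom_not_standard:
  assumes "p \<in> ideal_gen m f1_gens" "p \<noteq> 0"
  shows "\<not> standard (lead_monom p)"
proof
  assume std: "standard (lead_monom p)"
  have "fiber_coeff move_inv (move_inv (lead_monom p)) p = 0"
    using f1_gens_binom_poly assms(1) by (rule fiber_coeff_ideal_gen_binom_poly)
  moreover have "fiber_coeff move_inv (move_inv (lead_monom p)) p = Poly_Mapping.lookup p (lead_monom p)"
    using assms(2) standard_le_of_move_inv_eq[OF std] by (rule fiber_coeff_lead_monom)
  moreover have "Poly_Mapping.lookup p (lead_monom p) \<noteq> 0"
    using lead_monom_in_keys[OF assms(2)] by (simp add: in_keys_iff)
  ultimately show False by simp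
qed

lemma not_standardE:
  assumes "\<not> standard w"
  obtains v where "v \<in> {1..<m}" "quot w 0 \<noteq> 0" "quot w (m + v) \<noteq> 0"
    | u v where "0 < u" "u < v" "v < m" "quot w m \<noteq> 0" "quot w u \<noteq> 0" "quot w (m + v) \<noteq> 0"
  using assms unfolding standard_def by auto

lemma not_standard_divisible:
  assumes "\<not> standard w"
  obtains g :: "('a::field) mpoly"
  where "g \<in> groebner_gens - {0}" "\<And>x. Poly_Mapping.lookup (lead_monom g) x \<le> Poly_Mapping.lookup w x"
  using assms
proof (cases rule: not_standardE)
  case (1 v)
  let ?g = "fbin m d 1 (v + 1) :: 'a mpoly"
  have g: "?g = binom_poly (blk 0 + blk (m + v)) (blk v + blk m)"
    and less: "blk v + blk m < blk 0 + blk (m + v)"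
    using 1 fbin_1_eq f1_lead_less by blast+
  have "?g \<in> f1_gens"
    using 1 by (intro CollectI exI[of _ "v + 1"]) auto
  moreover have "?g \<noteq> 0" and lead: "lead_monom ?g = blk 0 + blk (m + v)"
    unfolding g using less by (rule binom_poly_nonzero, rule lead_monom_binom_poly)
  moreover have "Poly_Mapping.lookup (blk 0 + blk (m + v)) x \<le> Poly_Mapping.lookup w x" for x
    using 1 quot_pos_iff[of 0 w] quot_pos_iff[of "m + v" w] by (intro lookup_blk_add_le) auto
  ultimately show ?thesis by (intro that[of ?g]) simp_all
next
  case (2 u v)
  let ?g = "y_pow m 1 (d 1) * fbin m d (u + 1) (v + 1) :: 'a mpoly"
  have g: "?g = binom_poly (blk m + (blk u + blk (m + v))) (blk m + (blk v + blk (m + u)))"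
    using 2(1-3) by (rule y_pow_mult_fbin_eq)
  have less: "blk m + (blk v + blk (m + u)) < blk m + (blk u + blk (m + v))"
    using 2(1-3) by (rule y_pow_mult_fbin_lead_less)
  have "?g \<in> {y_pow m 1 (d 1) * fbin m d i j | i j. 2 \<le> i \<and> i < j \<and> j \<le> m}"
    using 2 by (intro CollectI exI[of _ "u + 1"] exI[of _ "v + 1"]) auto
  moreover have "?g \<noteq> 0" and lead: "lead_monom ?g = blk m + (blk u + blk (m + v))"
    unfolding g using less by (rule binom_poly_nonzero, rule lead_monom_binom_poly)
  moreover have "Poly_Mapping.lookup (blk m + (blk u + blk (m + v))) x \<le> Poly_Mapping.lookup w x" for x
    using 2 quot_pos_iff[of m w] quot_pos_iff[of u w] quot_pos_iff[of "m + v" w]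
    by (auto simp: lookup_add lookup_blk)
  ultimately show ?thesis by (intro that[of ?g]) simp_all
qed

lemma init_term_in_ideal_gen:
  assumes "p \<in> ideal_gen m f1_gens" "p \<noteq> 0"
  shows "init_term p \<in> ideal_gen m (init_term ` (groebner_gens - {0}))"
proof -
  obtain g :: "'a mpoly" where g: "g \<in> groebner_gens - {0}"
    and dvd: "\<And>x. Poly_Mapping.lookup (lead_monom g) x \<le> Poly_Mapping.lookup (lead_monom p) x"
    using not_standard_divisible[OF lead_monom_not_standard[OF assms]] by blast
  have "p \<in> polyring m"
    using assms(1) ideal_gen_subset_polyring[OF f1_gens_subset_polyring] by blast
  then have "Poly_Mapping.keys (lead_monom p) \<subseteq> {..<2 * m}"
    using lead_monom_in_keys[OF assms(2)] by (auto simp: polyring_def)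
  moreover have "Poly_Mapping.keys (lead_monom p - lead_monom g) \<subseteq> Poly_Mapping.keys (lead_monom p)"
    by (auto simp: in_keys_iff lookup_minus)
  ultimately have "Poly_Mapping.keys (lead_monom p - lead_monom g) \<subseteq> {..<2 * m}"
    by blast
  then show ?thesis
    unfolding init_term_eq_mult[OF dvd] using g by (intro ideal_gen_generator polyring_single) auto
qed

end

theorem lemma4p12:
  fixes m :: nat and d :: "nat \<Rightarrow> nat"
  assumes "m \<ge> 2"
    and "\<forall>i\<in>{1..m}. d i > 0"
  shows "is_groebner_basis m
           ({fbin m d 1 j | j. 2 \<le> j \<and> j \<le> m}
            \<union> {y_pow m 1 (d 1) * fbin m d i j | i j. 2 \<le> i \<and> i < j \<and> j \<le> m})
           (ideal_gen m {fbin m d 1 j | j. 2 \<le> j \<and> j \<le> m} :: ('a::field) mpoly set)"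
proof -
  interpret binomial_setting m d using assms by unfold_locales
  let ?G = "groebner_gens :: 'a mpoly set" and ?I = "ideal_gen m f1_gens :: 'a mpoly set"
  have "?G \<subseteq> ?I" by (rule groebner_gens_subset)
  moreover have "ideal_gen m (init_term ` (?G - {0})) \<subseteq> ideal_gen m (init_term ` (?I - {0}))"
    using \<open>?G \<subseteq> ?I\<close> by (intro ideal_gen_mono) blast
  moreover have "ideal_gen m (init_term ` (?I - {0})) \<subseteq> ideal_gen m (init_term ` (?G - {0}))"
    using init_term_in_ideal_gen by (intro ideal_gen_subset) blast
  ultimately show ?thesis unfolding is_groebner_basis_def by blast
qed

end
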